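(* Assume the setting described in the context (quadratic nonlinearity with exponentially decaying semigroup estimators and forcing). Let $f_0\in F$, put $F_0:=\|f_0\|+NJ$, and assume $4KNF_0\le1$. Then VP$(f_0)$ has a global solution $\varphi:[0,+\infty)\to F$ and, for all $t\ge0$, $\|\varphi(t)\|\le F_0\,\mathcal X(4KNF_0)\,e^{-Bt}$, where $\mathcal X(z):=(1-\sqrt{1-z})/(z/2)$ for $z\in(0,1]$ and $\mathcal X(0):=1$.
   Context: Banach spaces over a common field. $X\hookrightarrow Y$ means $X$ is a dense subspace of $Y$ with continuous inclusion. Setting: $F_+,F,F_-$ Banach spaces with norms $\|\cdot\|_+,\|\cdot\|,\|\cdot\|_-$, $F_+\hookrightarrow F\hookrightarrow F_-$; $\mathcal A:F_+\to F_-$ linear with $\|\cdot\|_+$ equivalent on $F_+$ to $\|f\|_-+\|\mathcal Af\|_-$; $\mathcal A$ generates a strongly continuous semigroup $(e^{t\mathcal A})_{t\ge0}$ on $F_-$ (domain $F_+$); $e^{t\mathcal A}(F)\subset F$ ($t\ge0$) with $(f,t)\mapsto e^{t\mathcal A}f$ continuous $F\times[0,\infty)\to F$; $e^{t\mathcal A}(F_-)\subset F$ ($t>0$) with $(f,t)\mapsto e^{t\mathcal A}f$ continuous $F_-\times(0,\infty)\to F$. There are constants $B\ge0$, $N>0$ with $\|e^{t\mathcal A}f\|\le e^{-Bt}\|f\|$ ($t\ge0$, $f\in F$) and $\|e^{t\mathcal A}f\|\le\mu_-(t)e^{-Bt}\|f\|_-$ ($t>0$, $f\in F_-$), where $\mu_-\in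 C((0,\infty),(0,\infty))$, $\mu_-(t)=O(t^{-(1-\sigma)})$ as $t\to0^+$ for some $\sigma\in(0,1]$, and $\int_0^t\mu_-(t-s)e^{-Bs}ds\le N$ for all $t\ge0$. $\mathscr P:F\times F\to F_-$ bilinear with $\|\mathscr P(f,g)\|_-\le K\|f\|\|g\|$, $K\in(0,\infty)$; $\xi:[0,+\infty)\to F_-$ locally Lipschitz with $\|\xi(t)\|_-\le Je^{-2Bt}$ for all $t\ge0$, for a constant $J\ge0$; $\mathcal P(f,t):=\mathscr P(f,f)+\xi(t)$. VP$(f_0)$ asks for $\varphi\in C([0,T),F)$ with $\varphi(t)=e^{t\mathcal A}f_0+\int_0^te^{(t-s)\mathcal A}\mathcal P(\varphi(s),s)\,ds$ for $t\in[0,T)$. *)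

theory Defs
  imports "HOL-Analysis.Analysis" "HOL-Library.Landau_Symbols"
begin

definition strongly_continuous_semigroup :: "(real \<Rightarrow> 'a::real_normed_vector \<Rightarrow> 'a) \<Rightarrow> bool" where
  "strongly_continuous_semigroup S \<longleftrightarrow>
     (\<forall>t\<ge>0. bounded_linear (S t)) \<and> S 0 = id \<and>
     (\<forall>t s. t \<ge> 0 \<longrightarrow> s \<ge> 0 \<longrightarrow> S (t + s) = S t \<circ> S s) \<and>
     (\<forall>x. continuous_on {0..} (\<lambda>t. S t x))"

text \<open>The operator A, defined on the space embedded via j, generates the semigroup S,
  with domain exactly the range of j.\<close>
definition generates :: "('p \<Rightarrow> 'm::real_normed_vector) \<Rightarrow> ('p \<Rightarrow> 'm) \<Rightarrow> (real \<Rightarrow> 'm \<Rightarrow> 'm) \<Rightarrow> bool" where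
  "generates j A S \<longleftrightarrow> strongly_continuous_semigroup S \<and>
     {x. \<exists>y. ((\<lambda>h. (1 / h) *\<^sub>R (S h x - x)) \<longlongrightarrow> y) (at_right 0)} = range j \<and>
     (\<forall>p. ((\<lambda>h. (1 / h) *\<^sub>R (S h (j p) - j p)) \<longlongrightarrow> A p) (at_right 0))"

definition dense_embedding :: "('a::real_normed_vector \<Rightarrow> 'b::real_normed_vector) \<Rightarrow> bool" where
  "dense_embedding i \<longleftrightarrow> bounded_linear i \<and> inj i \<and> closure (range i) = UNIV"

definition chiX :: "real \<Rightarrow> real" where
  "chiX z = (if z = 0 then 1 else (1 - sqrt (1 - z)) / (z / 2))"

end

theory Submission
  imports Defs
begin

text \<open>The mild equation is solved by Picard iteration on the continuous paths with
  \<open>\<parallel>\<phi> t\<parallel> \<le> R e\<^sup>-\<^sup>B\<^sup>t\<close>, where \<open>R = F\<^sub>0 \<chi>(4KNF\<^sub>0)\<close> is the smaller root of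
  \<open>KN R\<^sup>2 - R + F\<^sub>0 = 0\<close>; the estimates \<open>\<parallel>e\<^sup>t\<^sup>A f\<^sub>0\<parallel> \<le> e\<^sup>-\<^sup>B\<^sup>t \<parallel>f\<^sub>0\<parallel>\<close> and
  \<open>\<integral>\<^sub>0\<^sup>t \<mu>(t-s) e\<^sup>-\<^sup>B\<^sup>s ds \<le> N\<close> make this set invariant. On it the quadratic term has
  Lipschitz constant \<open>2KR\<close>, so the plain contraction factor \<open>2KNR\<close> may equal \<open>1\<close> when
  \<open>4KNF\<^sub>0 = 1\<close>; measuring distances with the weight \<open>e\<^sup>(\<^sup>\<kappa>\<^sup>-\<^sup>B\<^sup>)\<^sup>t\<close> for large \<open>\<kappa>\<close>
  damps the kernel and halves the factor. The weak singularity \<open>\<mu> r = O(r\<^sup>\<sigma>\<^sup>-\<^sup>1)\<close> makes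
  the convolution integrals exist and depend continuously on \<open>t\<close>.\<close>

section \<open>Weakly singular integrals\<close>

lemma has_integral_powr_diff:
  fixes a t \<sigma> :: real
  assumes "0 < \<sigma>" "a \<le> t"
  shows "((\<lambda>s. (t - s) powr (\<sigma> - 1)) has_integral (t - a) powr \<sigma> / \<sigma>) {a..t}"
proof -
  have "((\<lambda>s. (t - s) powr (\<sigma> - 1)) has_integral
          (\<lambda>s. - ((t - s) powr \<sigma> / \<sigma>)) t - (\<lambda>s. - ((t - s) powr \<sigma> / \<sigma>)) a) {a..t}"
  proof (rule fundamental_theorem_of_calculus_interior)
    show "continuous_on {a..t} (\<lambda>s. - ((t - s) powr \<sigma> / \<sigma>))"
      using assms by (intro continuous_intros continuous_on_powr') auto
    show "((\<lambda>s. - ((t - s) powr \<sigma> / \<sigma>)) has_vector_derivative (t - x) powr (\<sigma> - 1)) (at x)"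
      if "x \<in> {a<..<t}" for x
      using that assms unfolding has_real_derivative_iff_has_vector_derivative[symmetric]
      by (auto intro!: derivative_eq_intros simp: field_simps)
  qed (use assms in auto)
  then show ?thesis using assms by simp
qed

lemma powr_integral_eventually_small:
  fixes \<sigma> e M :: real
  assumes "0 < \<sigma>" "0 < e" "0 < r"
  obtains \<delta> where "0 < \<delta>" "\<delta> \<le> r" "M * (\<delta> powr \<sigma> / \<sigma>) < e"
proof -
  have "((\<lambda>\<delta>. M * (\<delta> powr \<sigma> / \<sigma>)) \<longlongrightarrow> M * (0 / \<sigma>)) (at_right 0)"
    using assms eventually_at_right_less[of 0]
    by (intro tendsto_intros tendsto_zero_powrI) (auto elim: eventually_mono)
  then have "\<forall>\<^sub>F \<delta> in at_right 0. M * (\<delta> powr \<sigma> / \<sigma>) < e"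
    using assms(2) by (simp add: order_tendstoD(2))
  then obtain d where d: "d > 0" and small: "\<And>\<delta>. 0 < \<delta> \<Longrightarrow> \<delta> < d \<Longrightarrow> M * (\<delta> powr \<sigma> / \<sigma>) < e"
    unfolding eventually_at_right_field by auto
  show ?thesis
    using d assms(3) by (intro that[of "min r (d / 2)"] small) auto
qed

lemma norm_riemann_sum_diff_le:
  fixes f g :: "real \<Rightarrow> 'b::real_normed_vector"
  assumes D: "D tagged_division_of {a..b}"
    and le: "\<And>x. x \<in> {a..b} \<Longrightarrow> norm (f x - g x) \<le> h x"
  shows "norm ((\<Sum>(x,K)\<in>D. Henstock_Kurzweil_Integration.content K *\<^sub>R f x)
                - (\<Sum>(x,K)\<in>D. Henstock_Kurzweil_Integration.content K *\<^sub>R g x))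
           \<le> (\<Sum>(x,K)\<in>D. Henstock_Kurzweil_Integration.content K *\<^sub>R h x)"
proof -
  have "(\<Sum>(x,K)\<in>D. Henstock_Kurzweil_Integration.content K *\<^sub>R f x)
          - (\<Sum>(x,K)\<in>D. Henstock_Kurzweil_Integration.content K *\<^sub>R g x)
        = (\<Sum>(x,K)\<in>D. Henstock_Kurzweil_Integration.content K *\<^sub>R (f x - g x))"
    by (simp add: sum_subtractf[symmetric] split_def scaleR_diff_right)
  also have "norm \<dots> \<le> (\<Sum>(x,K)\<in>D. norm (Henstock_Kurzweil_Integration.content K *\<^sub>R (f x - g x)))"
    by (simp add: split_def sum_norm_le)
  also have "\<dots> \<le> (\<Sum>(x,K)\<in>D. Henstock_Kurzweil_Integration.content K *\<^sub>R h x)"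
  proof (rule sum_mono, clarify)
    fix x K assume "(x, K) \<in> D"
    then have "x \<in> {a..b}" using tagged_division_ofD(2,3)[OF D] by blast
    then show "norm (Henstock_Kurzweil_Integration.content K *\<^sub>R (f x - g x))
               \<le> Henstock_Kurzweil_Integration.content K *\<^sub>R h x"
      using le by (simp add: mult_left_mono)
  qed
  finally show ?thesis .
qed

lemma norm_diff_le_via_two_points:
  fixes a b c d :: "'b::real_normed_vector"
  shows "norm (a - b) \<le> norm (a - c) + norm (c - d) + norm (b - d)"
proof -
  have "a - b = (a - c) + (c - d) - (b - d)" by simp
  then show ?thesis by (metis norm_triangle_ineq4 norm_triangle_ineq order_trans add_right_mono)
qed

text \<open>Unlike \<open>integrable_uniform_limit\<close>, this applies to integrands that are unbounded near a
  point, such as the weakly singular ones below.\<close>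
lemma integrable_if_approximable_in_integral:
  fixes f :: "real \<Rightarrow> 'b::banach"
  assumes approx: "\<And>e. e > 0 \<Longrightarrow> \<exists>g h. g integrable_on {a..b} \<and> h integrable_on {a..b} \<and>
                 (\<forall>x\<in>{a..b}. norm (f x - g x) \<le> h x) \<and> integral {a..b} h < e"
  shows "f integrable_on {a..b}"
proof -
  define RS where "RS u \<D> = (\<Sum>(x,K)\<in>\<D>. Henstock_Kurzweil_Integration.content K *\<^sub>R u x)"
    for u :: "real \<Rightarrow> 'b" and \<D> :: "(real \<times> real set) set"
  have "\<exists>\<gamma>. gauge \<gamma> \<and>
          (\<forall>\<D>1 \<D>2. \<D>1 tagged_division_of {a..b} \<and> \<gamma> fine \<D>1 \<and>
                    \<D>2 tagged_division_of {a..b} \<and> \<gamma> fine \<D>2 \<longrightarrow> norm (RS f \<D>1 - RS f \<D>2) < e)"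
    if e: "e > 0" for e
  proof -
    obtain g h where g: "g integrable_on {a..b}" and h: "h integrable_on {a..b}"
      and le: "\<forall>x\<in>{a..b}. norm (f x - g x) \<le> h x" and hi: "integral {a..b} h < e/8"
      using approx[of "e/8"] e by auto
    from g[unfolded box_real(2)[symmetric] integrable_Cauchy] e
    obtain \<gamma>1 where \<gamma>1: "gauge \<gamma>1"
      and g_Cauchy: "\<And>\<D>1 \<D>2. \<D>1 tagged_division_of {a..b} \<Longrightarrow> \<gamma>1 fine \<D>1 \<Longrightarrow>
                       \<D>2 tagged_division_of {a..b} \<Longrightarrow> \<gamma>1 fine \<D>2 \<Longrightarrow> norm (RS g \<D>1 - RS g \<D>2) < e/4"
      unfolding RS_def box_real(2) by (metis (no_types, lifting) divide_pos_pos zero_less_numeral)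
    from integrable_integral[OF h, unfolded has_integral_real, rule_format, of "e/8"] e
    obtain \<gamma>2 where \<gamma>2: "gauge \<gamma>2"
      and h_sums: "\<And>\<D>. \<D> tagged_division_of {a..b} \<Longrightarrow> \<gamma>2 fine \<D> \<Longrightarrow>
        \<bar>(\<Sum>(x,K)\<in>\<D>. Henstock_Kurzweil_Integration.content K * h x) - integral {a..b} h\<bar> < e/8"
      by auto
    have f_near_g: "norm (RS f \<D> - RS g \<D>) < e/4"
      if \<D>: "\<D> tagged_division_of {a..b}" "\<gamma>2 fine \<D>" for \<D>
    proof -
      have "norm (RS f \<D> - RS g \<D>) \<le> (\<Sum>(x,K)\<in>\<D>. Henstock_Kurzweil_Integration.content K * h x)"
        unfolding RS_def using norm_riemann_sum_diff_le[OF \<D>(1), of f g h] le by simp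
      moreover have "(\<Sum>(x,K)\<in>\<D>. Henstock_Kurzweil_Integration.content K * h x) < e/4"
        using h_sums[OF \<D>] hi by arith
      ultimately show ?thesis by linarith
    qed
    show ?thesis
    proof (intro exI conjI allI impI)
      show "gauge (\<lambda>x. \<gamma>1 x \<inter> \<gamma>2 x)" using \<gamma>1 \<gamma>2 by auto
      fix \<D>1 \<D>2
      assume "\<D>1 tagged_division_of {a..b} \<and> (\<lambda>x. \<gamma>1 x \<inter> \<gamma>2 x) fine \<D>1 \<and>
              \<D>2 tagged_division_of {a..b} \<and> (\<lambda>x. \<gamma>1 x \<inter> \<gamma>2 x) fine \<D>2"
      then have D: "\<D>1 tagged_division_of {a..b}" "\<D>2 tagged_division_of {a..b}"
        and fine: "\<gamma>1 fine \<D>1" "\<gamma>2 fine \<D>1" "\<gamma>1 fine \<D>2" "\<gamma>2 fine \<D>2"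
        by (auto simp: fine_Int)
      have "norm (RS f \<D>1 - RS f \<D>2)
            \<le> norm (RS f \<D>1 - RS g \<D>1) + norm (RS g \<D>1 - RS g \<D>2) + norm (RS f \<D>2 - RS g \<D>2)"
        by (rule norm_diff_le_via_two_points)
      also have "\<dots> < e"
        using f_near_g[OF D(1) fine(2)] f_near_g[OF D(2) fine(4)] g_Cauchy[OF D(1) fine(1) D(2) fine(3)] e
        by linarith
      finally show "norm (RS f \<D>1 - RS f \<D>2) < e" .
    qed
  qed
  then show ?thesis
    unfolding box_real(2)[symmetric] integrable_Cauchy RS_def by simp
qed

lemma norm_integral_le_of_bound_on_Ico:
  fixes f :: "real \<Rightarrow> 'b::banach"
  assumes f: "f integrable_on {a..t}" and h: "h integrable_on {a..t}"
    and le: "\<And>s. a \<le> s \<Longrightarrow> s < t \<Longrightarrow> norm (f s) \<le> h s"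
  shows "norm (integral {a..t} f) \<le> integral {a..t} h"
proof -
  let ?cut = "\<lambda>f s. if s = t then 0 else f s"
  have "norm (integral {a..t} (?cut f)) \<le> integral {a..t} (?cut h)"
    using integrable_spike[OF f, of "{t}" "?cut f"] integrable_spike[OF h, of "{t}" "?cut h"] le
    by (intro integral_norm_bound_integral) auto
  moreover have "integral {a..t} (?cut f) = integral {a..t} f" "integral {a..t} (?cut h) = integral {a..t} h"
    by (rule integral_spike[of "{t}"]; simp)+
  ultimately show ?thesis by simp
qed

text \<open>Cut out \<open>[t - \<delta>, t]\<close>, which contributes at most \<open>M \<delta>\<^sup>\<sigma> / \<sigma>\<close>.\<close>
lemma integrable_weakly_singular:
  fixes f :: "real \<Rightarrow> 'b::banach"
  assumes cont: "continuous_on {a..<t} f" and \<sigma>: "\<sigma> > 0" and r: "r > 0"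
    and le: "\<And>s. a \<le> s \<Longrightarrow> s < t \<Longrightarrow> t - s \<le> r \<Longrightarrow> norm (f s) \<le> M * (t - s) powr (\<sigma> - 1)"
  shows "f integrable_on {a..t}"
proof (cases "a < t")
  case False
  then show ?thesis
    by (metis box_real(2) content_real_eq_0 integrable_on_null not_less)
next
  case True
  show ?thesis
  proof (rule integrable_if_approximable_in_integral)
    fix e :: real assume "e > 0"
    then obtain \<delta> where \<delta>: "0 < \<delta>" "\<delta> \<le> min r (t - a)" and small: "M * (\<delta> powr \<sigma> / \<sigma>) < e"
      using powr_integral_eventually_small[OF \<sigma>, of e "min r (t - a)"] r True by auto
    define g where "g s = (if s \<in> {a..t-\<delta>} \<union> {t} then f s else 0)" for s
    define h where "h s = (if s \<in> {t-\<delta>..t} then M * (t - s) powr (\<sigma> - 1) else 0)" for s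
    have "(\<lambda>s. if s \<in> {a..t-\<delta>} then f s else 0) integrable_on {a..t}"
      using integrable_continuous_interval[OF continuous_on_subset[OF cont]] \<delta>
      unfolding integrable_restrict_Int by (simp add: Int_absorb2 subset_iff)
    then have g_int: "g integrable_on {a..t}"
      by (rule integrable_spike[of _ _ "{t}"]) (auto simp: g_def)
    have "{t-\<delta>..t} \<inter> {a..t} = {t-\<delta>..t}" using \<delta> by auto
    then have h_int: "(h has_integral M * (\<delta> powr \<sigma> / \<sigma>)) {a..t}"
      unfolding h_def has_integral_restrict_Int
      using has_integral_mult_right[OF has_integral_powr_diff[OF \<sigma>, of "t - \<delta>" t]] \<delta> by simp
    have error_le: "\<forall>x\<in>{a..t}. norm (f x - g x) \<le> h x"
    proof
      fix x assume x: "x \<in> {a..t}"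
      show "norm (f x - g x) \<le> h x"
      proof (cases "x \<le> t - \<delta> \<or> x = t")
        case True
        then show ?thesis
          using x le[of x] \<delta> by (auto simp: g_def h_def intro: order_trans[OF norm_ge_zero])
      next
        case False
        then show ?thesis using x \<delta> le[of x] by (auto simp: g_def h_def)
      qed
    qed
    moreover have "integral {a..t} h < e" using integral_unique[OF h_int] small by simp
    moreover have "h integrable_on {a..t}" using h_int by blast
    ultimately show "\<exists>g h. g integrable_on {a..t} \<and> h integrable_on {a..t} \<and>
                 (\<forall>x\<in>{a..t}. norm (f x - g x) \<le> h x) \<and> integral {a..t} h < e"
      using g_int by blast
  qed
qed

section \<open>Convolution with a weakly singular kernel\<close>

locale weakly_singular_kernel =
  fixes T :: "real \<Rightarrow> 'm::real_normed_vector \<Rightarrow> 'f::banach" and M \<sigma> r0 :: real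
  assumes continuous: "continuous_on (UNIV \<times> {0<..}) (\<lambda>(g, r). T r g)"
    and norm_le: "\<And>r g. 0 < r \<Longrightarrow> r \<le> r0 \<Longrightarrow> norm (T r g) \<le> M * r powr (\<sigma> - 1) * norm g"
    and M_nonneg: "0 \<le> M" and \<sigma>_pos: "0 < \<sigma>" and r0_pos: "0 < r0"
begin

lemma continuous_on_convolution_integrand:
  assumes G: "continuous_on S G" and U: "\<And>t s. (t, s) \<in> U \<Longrightarrow> s \<in> S \<and> s < t"
  shows "continuous_on U (\<lambda>(t, s). T (t - s) (G s))"
proof -
  have "continuous_on U ((\<lambda>(g, r). T r g) \<circ> (\<lambda>(t, s). (G s, t - s)))"
  proof (rule continuous_on_compose)
    have "continuous_on U (\<lambda>x. G (snd x))"
      by (rule continuous_on_compose2[OF G]) (auto intro: continuous_intros dest: U)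
    then show "continuous_on U (\<lambda>(t, s). (G s, t - s))"
      by (auto simp: case_prod_unfold intro!: continuous_intros)
    show "continuous_on ((\<lambda>(t, s). (G s, t - s)) ` U) (\<lambda>(g, r). T r g)"
      by (rule continuous_on_subset[OF continuous]) (auto dest: U)
  qed
  then show ?thesis by (simp add: o_def case_prod_unfold)
qed

lemma norm_convolution_integrand_le:
  assumes "norm (G s) \<le> c" "s < t" "t - s \<le> r0"
  shows "norm (T (t - s) (G s)) \<le> M * c * (t - s) powr (\<sigma> - 1)"
proof -
  have "norm (T (t - s) (G s)) \<le> M * (t - s) powr (\<sigma> - 1) * norm (G s)"
    using assms by (intro norm_le) auto
  also have "\<dots> \<le> M * (t - s) powr (\<sigma> - 1) * c"
    using assms M_nonneg by (intro mult_left_mono) auto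
  finally show ?thesis by (simp add: mult_ac)
qed

lemma convolution_integrable:
  assumes G: "continuous_on {a..t} G" and c: "\<forall>s\<in>{a..t}. norm (G s) \<le> c"
  shows "(\<lambda>s. T (t - s) (G s)) integrable_on {a..t}"
proof (rule integrable_weakly_singular[OF _ \<sigma>_pos r0_pos])
  have "continuous_on ({t} \<times> {a..<t}) (\<lambda>(t, s). T (t - s) (G s))"
    by (rule continuous_on_convolution_integrand[OF G]) auto
  then have "continuous_on {a..<t} ((\<lambda>(t, s). T (t - s) (G s)) \<circ> Pair t)"
    by (intro continuous_on_compose continuous_intros) (auto elim: continuous_on_subset)
  then show "continuous_on {a..<t} (\<lambda>s. T (t - s) (G s))"
    by (simp add: o_def)
  show "norm (T (t - s) (G s)) \<le> M * c * (t - s) powr (\<sigma> - 1)" if "a \<le> s" "s < t" "t - s \<le> r0" for s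
    using that c by (intro norm_convolution_integrand_le) auto
qed

lemma norm_convolution_le:
  assumes G: "continuous_on {a..t} G" and c: "\<forall>s\<in>{a..t}. norm (G s) \<le> c"
    and "a \<le> t" "t - a \<le> r0"
  shows "norm (integral {a..t} (\<lambda>s. T (t - s) (G s))) \<le> M * c * ((t - a) powr \<sigma> / \<sigma>)"
proof -
  have bound: "((\<lambda>s. M * c * (t - s) powr (\<sigma> - 1)) has_integral M * c * ((t - a) powr \<sigma> / \<sigma>)) {a..t}"
    using has_integral_mult_right[OF has_integral_powr_diff[OF \<sigma>_pos \<open>a \<le> t\<close>]] by simp
  have "norm (integral {a..t} (\<lambda>s. T (t - s) (G s))) \<le> integral {a..t} (\<lambda>s. M * c * (t - s) powr (\<sigma> - 1))"
  proof (rule norm_integral_le_of_bound_on_Ico[OF convolution_integrable[OF G c]])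
    show "(\<lambda>s. M * c * (t - s) powr (\<sigma> - 1)) integrable_on {a..t}" using bound by blast
    show "norm (T (t - s) (G s)) \<le> M * c * (t - s) powr (\<sigma> - 1)" if "a \<le> s" "s < t" for s
      using that c assms by (intro norm_convolution_integrand_le) auto
  qed
  then show ?thesis using integral_unique[OF bound] by simp
qed

text \<open>Continuity at \<open>t\<^sub>0\<close>: split the integral at \<open>a = t\<^sub>0 - \<delta>/2\<close>; the part over \<open>[0, a]\<close> has
  a continuous integrand near \<open>t\<^sub>0\<close>, the part over \<open>[a, t]\<close> is uniformly small.\<close>
lemma continuous_on_convolution:
  assumes G: "continuous_on {0..} G" and c: "\<And>s. 0 \<le> s \<Longrightarrow> norm (G s) \<le> c"
  shows "continuous_on {0..} (\<lambda>t. integral {0..t} (\<lambda>s. T (t - s) (G s)))"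
  unfolding continuous_on_def
proof (intro ballI tendstoI)
  fix t0 e :: real assume t0: "t0 \<in> {0..}" and e: "0 < e"
  let ?C = "\<lambda>t a b. integral {a..b} (\<lambda>s. T (t - s) (G s))"
  have G': "\<And>a b. 0 \<le> a \<Longrightarrow> continuous_on {a..b} G" "\<And>a b. 0 \<le> a \<Longrightarrow> \<forall>s\<in>{a..b}. norm (G s) \<le> c"
    by (auto intro: continuous_on_subset[OF G] c)
  have "0 \<le> c" using c[of 0] norm_ge_zero order_trans by blast
  obtain \<delta> where \<delta>: "0 < \<delta>" "\<delta> \<le> r0" and small: "M * c * (\<delta> powr \<sigma> / \<sigma>) < e/3"
    using powr_integral_eventually_small[OF \<sigma>_pos _ r0_pos, of "e/3" "M * c"] e by auto
  define a where "a = max 0 (t0 - \<delta>/2)"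
  have a: "0 \<le> a" "a \<le> t0" using t0 \<delta> by (auto simp: a_def)
  have tail: "norm (?C t a t) < e/3" if t: "0 \<le> t" "\<bar>t - t0\<bar> < \<delta>/2" for t
  proof -
    have at: "a \<le> t" "t - a \<le> \<delta>" using t \<delta> unfolding a_def by arith+
    then have "norm (?C t a t) \<le> M * c * ((t - a) powr \<sigma> / \<sigma>)"
      using \<delta> by (intro norm_convolution_le G'(1)[OF a(1)] G'(2)[OF a(1)]) auto
    also have "\<dots> \<le> M * c * (\<delta> powr \<sigma> / \<sigma>)"
      using at \<open>0 \<le> c\<close> M_nonneg \<sigma>_pos
      by (intro mult_left_mono divide_right_mono powr_mono2) auto
    finally show ?thesis using small by linarith
  qed
  have head: "((\<lambda>t. ?C t 0 a) \<longlongrightarrow> ?C t0 0 a) (at t0 within {0..})"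
  proof (cases "a = 0")
    case False
    then have "a < t0" using \<delta> by (auto simp: a_def)
    have "continuous_on {a<..} (\<lambda>t. integral (cbox 0 a) (\<lambda>s. T (t - s) (G s)))"
      by (rule integral_continuous_on_param, rule continuous_on_convolution_integrand[OF G]) auto
    then have "isCont (\<lambda>t. ?C t 0 a) t0"
      using \<open>a < t0\<close> by (simp add: continuous_on_eq_continuous_at)
    then show ?thesis
      using continuous_at_imp_continuous_at_within continuous_within by blast
  qed simp
  have near: "\<forall>\<^sub>F t in at t0 within {0..}. 0 \<le> t \<and> \<bar>t - t0\<bar> < \<delta>/2"
    unfolding eventually_at dist_real_def using \<delta> by (auto intro!: exI[of _ "\<delta>/2"])
  moreover have "\<forall>\<^sub>F t in at t0 within {0..}. dist (?C t 0 a) (?C t0 0 a) < e/3"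
    using tendstoD[OF head, of "e/3"] e by simp
  ultimately show "\<forall>\<^sub>F t in at t0 within {0..}. dist (?C t 0 t) (?C t0 0 t0) < e"
  proof eventually_elim
    case (elim t)
    then have "a \<le> t" unfolding a_def by arith
    have split: "?C t 0 t = ?C t 0 a + ?C t a t" if "a \<le> t" "0 \<le> t" for t
      using Henstock_Kurzweil_Integration.integral_combine[OF a(1) that(1)
              convolution_integrable[OF G'(1)[of 0 t, OF order.refl] G'(2)[of 0 t, OF order.refl]]] by simp
    have "dist (?C t 0 t) (?C t0 0 t0) \<le> norm (?C t 0 t - ?C t 0 a) + norm (?C t 0 a - ?C t0 0 a) + norm (?C t0 0 t0 - ?C t0 0 a)"
      unfolding dist_norm by (rule norm_diff_le_via_two_points)
    also have "\<dots> = norm (?C t a t) + dist (?C t 0 a) (?C t0 0 a) + norm (?C t0 a t0)"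
      using split[OF \<open>a \<le> t\<close>] split[OF a(2)] elim a by (simp add: dist_norm)
    also have "\<dots> < e"
      using tail[of t] tail[of t0] elim t0 \<delta> by auto
    finally show ?case .
  qed
qed

end

section \<open>Picard iteration in a weighted norm\<close>

lemma continuous_on_atLeast_if_continuous_on_Icc:
  fixes f :: "real \<Rightarrow> 'a::topological_space"
  assumes "\<And>T. a \<le> T \<Longrightarrow> continuous_on {a..T} f"
  shows "continuous_on {a..} f"
  unfolding continuous_on_def
proof
  fix x :: real assume x: "x \<in> {a..}"
  have "(f \<longlongrightarrow> f x) (at x within {a..x+1})"
    using assms[of "x+1"] x unfolding continuous_on_def by auto
  moreover have "at x within {a..} = at x within {a..x+1}"
    by (rule at_within_nhd[of x "{..<x+1}"]) auto
  ultimately show "(f \<longlongrightarrow> f x) (at x within {a..})" by simp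
qed

lemma geometric_increments_tendsto:
  fixes x :: "nat \<Rightarrow> 'a::banach"
  assumes incr: "\<And>n. norm (x (Suc n) - x n) \<le> C * q ^ n" and q: "0 \<le> q" "q < 1"
  obtains L where "x \<longlonglongrightarrow> L" "\<And>n. norm (L - x n) \<le> q ^ n / (1 - q) * C"
proof -
  define d where "d n = x (Suc n) - x n" for n
  have geometric: "summable (\<lambda>n. C * q ^ n)" using q by (intro summable_mult summable_geometric) auto
  then have "summable d"
    by (rule summable_comparison_test') (use incr in \<open>auto simp: d_def\<close>)
  define L where "L = x 0 + suminf d"
  have "(\<lambda>n. x 0 + (\<Sum>k<n. d k)) \<longlonglongrightarrow> L"
    unfolding L_def by (intro tendsto_add tendsto_const summable_LIMSEQ \<open>summable d\<close>)
  moreover have "x = (\<lambda>n. x 0 + (\<Sum>k<n. d k))" by (simp add: d_def sum_lessThan_telescope)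
  ultimately have "x \<longlonglongrightarrow> L" by simp
  moreover have "norm (L - x n) \<le> q ^ n / (1 - q) * C" for n
  proof -
    have "x n = x 0 + (\<Sum>k<n. d k)" by (simp add: d_def sum_lessThan_telescope)
    then have "L - x n = (\<Sum>k. d (k + n))"
      by (simp add: L_def suminf_minus_initial_segment[OF \<open>summable d\<close>])
    also have "norm \<dots> \<le> (\<Sum>k. C * q ^ n * q ^ k)"
    proof (rule norm_suminf_le)
      show "norm (d (k + n)) \<le> C * q ^ n * q ^ k" for k
        using incr[of "k + n"] by (simp add: d_def power_add mult_ac)
      show "summable (\<lambda>k. C * q ^ n * q ^ k)"
        using q by (intro summable_mult summable_geometric) auto
    qed
    also have "\<dots> = q ^ n / (1 - q) * C"
      using q by (simp add: suminf_mult suminf_geometric summable_geometric)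
    finally show ?thesis .
  qed
  ultimately show ?thesis by (rule that)
qed

definition dominated_paths :: "(real \<Rightarrow> real) \<Rightarrow> (real \<Rightarrow> 'a::real_normed_vector) set" where
  "dominated_paths b = {\<phi>. continuous_on {0..} \<phi> \<and> (\<forall>t\<ge>0. norm (\<phi> t) \<le> b t)}"

text \<open>No complete function space is needed: the iterates converge pointwise, and locally
  uniformly because \<open>w\<close> is locally bounded.\<close>
lemma weighted_contraction_fixpoint:
  fixes \<Phi> :: "(real \<Rightarrow> 'a::banach) \<Rightarrow> real \<Rightarrow> 'a" and b w :: "real \<Rightarrow> real"
  assumes maps: "\<And>\<phi>. \<phi> \<in> dominated_paths b \<Longrightarrow> \<Phi> \<phi> \<in> dominated_paths b"
    and zero: "(\<lambda>_. 0) \<in> (dominated_paths b :: (real \<Rightarrow> 'a) set)"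
    and b_le_w: "\<And>t. 0 \<le> t \<Longrightarrow> b t \<le> w t"
    and w_cont: "continuous_on {0..} w"
    and contraction: "\<And>\<phi> \<psi> D t. \<phi> \<in> dominated_paths b \<Longrightarrow> \<psi> \<in> dominated_paths b \<Longrightarrow> 0 \<le> D \<Longrightarrow>
           (\<And>s. 0 \<le> s \<Longrightarrow> norm (\<phi> s - \<psi> s) \<le> D * w s) \<Longrightarrow> 0 \<le> t \<Longrightarrow>
           norm (\<Phi> \<phi> t - \<Phi> \<psi> t) \<le> q * D * w t"
    and q: "0 \<le> q" "q < 1"
  obtains \<phi> where "\<phi> \<in> dominated_paths b" "\<And>t. 0 \<le> t \<Longrightarrow> \<Phi> \<phi> t = \<phi> t"
proof -
  define x where "x n = (\<Phi> ^^ n) (\<lambda>_. 0)" for n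
  have x_dom: "x n \<in> dominated_paths b" for n
    using zero by (induction n) (auto simp: x_def intro: maps)
  have x_incr: "norm (x (Suc n) t - x n t) \<le> w t * q ^ n" if "0 \<le> t" for n t
    using that
  proof (induction n arbitrary: t)
    case 0
    then show ?case
      using x_dom[of 1] b_le_w[of t] unfolding dominated_paths_def by (auto simp: x_def)
  next
    case (Suc n)
    have "norm (\<Phi> (x (Suc n)) t - \<Phi> (x n) t) \<le> q * q ^ n * w t"
      using Suc q by (intro contraction x_dom) (auto simp: mult.commute)
    then show ?case by (simp add: x_def mult_ac)
  qed
  have "\<exists>L. (\<lambda>n. x n t) \<longlonglongrightarrow> L \<and> (\<forall>n. norm (L - x n t) \<le> q ^ n / (1 - q) * w t)"
    if "0 \<le> t" for t
    using geometric_increments_tendsto[of "\<lambda>n. x n t" "w t" q] x_incr[OF that] q by blast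
  then have "\<forall>t. \<exists>L. 0 \<le> t \<longrightarrow>
               (\<lambda>n. x n t) \<longlonglongrightarrow> L \<and> (\<forall>n. norm (L - x n t) \<le> q ^ n / (1 - q) * w t)"
    by blast
  from choice[OF this] obtain \<phi> where
    \<phi>: "\<forall>t. 0 \<le> t \<longrightarrow> (\<lambda>n. x n t) \<longlonglongrightarrow> \<phi> t \<and> (\<forall>n. norm (\<phi> t - x n t) \<le> q ^ n / (1 - q) * w t)"
    by blast
  then have \<phi>_lim: "\<And>t. 0 \<le> t \<Longrightarrow> (\<lambda>n. x n t) \<longlonglongrightarrow> \<phi> t"
    and \<phi>_near: "\<And>t n. 0 \<le> t \<Longrightarrow> norm (\<phi> t - x n t) \<le> q ^ n / (1 - q) * w t"
    by blast+
  have \<phi>_dom: "\<phi> \<in> dominated_paths b"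
    unfolding dominated_paths_def
  proof (intro CollectI conjI allI impI)
    show "norm (\<phi> t) \<le> b t" if "0 \<le> t" for t
      using x_dom that by (intro LIMSEQ_le_const2[OF tendsto_norm[OF \<phi>_lim]]) (auto simp: dominated_paths_def)
    show "continuous_on {0..} \<phi>"
    proof (rule continuous_on_atLeast_if_continuous_on_Icc)
      fix T :: real
      have "bounded (w ` {0..T})"
        by (intro compact_imp_bounded compact_continuous_image continuous_on_subset[OF w_cont]) auto
      then obtain W where W: "\<And>t. t \<in> {0..T} \<Longrightarrow> w t \<le> W"
        unfolding bounded_real by (meson abs_le_D1 imageI)
      have "uniform_limit {0..T} x \<phi> sequentially"
        unfolding uniform_limit_sequentially_iff
      proof (intro allI impI)
        fix e :: real assume "0 < e"
        have "(\<lambda>n. q ^ n / (1 - q) * W) \<longlonglongrightarrow> 0"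
          using q by (intro tendsto_mult_left_zero tendsto_divide_zero LIMSEQ_power_zero) auto
        from order_tendstoD(2)[OF this \<open>0 < e\<close>]
        obtain N where N: "\<And>n. N \<le> n \<Longrightarrow> q ^ n / (1 - q) * W < e"
          unfolding eventually_sequentially by blast
        have "dist (x n t) (\<phi> t) < e" if "N \<le> n" "t \<in> {0..T}" for n t
        proof -
          have "dist (x n t) (\<phi> t) \<le> q ^ n / (1 - q) * w t"
            using \<phi>_near[of t n] that by (simp add: dist_norm norm_minus_commute)
          also have "\<dots> \<le> q ^ n / (1 - q) * W"
            using W[OF that(2)] q by (intro mult_left_mono) auto
          finally show ?thesis using N[OF that(1)] by linarith
        qed
        then show "\<exists>N. \<forall>n\<ge>N. \<forall>t\<in>{0..T}. dist (x n t) (\<phi> t) < e" by blast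
      qed
      then show "continuous_on {0..T} \<phi>"
      proof (rule uniform_limit_theorem[rotated])
        show "\<forall>\<^sub>F n in sequentially. continuous_on {0..T} (x n)"
          using x_dom by (auto simp: dominated_paths_def intro!: always_eventually
                                  intro: continuous_on_subset[of "{0..}"])
      qed simp
    qed
  qed
  moreover have "\<Phi> \<phi> t = \<phi> t" if "0 \<le> t" for t
  proof -
    have null: "(\<lambda>n. \<Phi> \<phi> t - x (Suc n) t) \<longlonglongrightarrow> 0"
    proof (rule Lim_null_comparison)
      have "norm (\<Phi> \<phi> t - \<Phi> (x n) t) \<le> q * (q ^ n / (1 - q)) * w t" for n
        by (rule contraction[OF \<phi>_dom x_dom _ \<phi>_near that]) (use q in auto)
      then show "\<forall>\<^sub>F n in sequentially. norm (\<Phi> \<phi> t - x (Suc n) t) \<le> q * (q ^ n / (1 - q)) * w t"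
        by (simp add: x_def)
      show "(\<lambda>n. q * (q ^ n / (1 - q)) * w t) \<longlonglongrightarrow> 0"
        using q by (intro tendsto_mult_left_zero tendsto_mult_right_zero tendsto_divide_zero
                          LIMSEQ_power_zero) auto
    qed
    have "(\<lambda>n. x (Suc n) t) \<longlonglongrightarrow> \<Phi> \<phi> t"
      using tendsto_diff[OF tendsto_const null, of "\<Phi> \<phi> t"] by simp
    then show ?thesis using LIMSEQ_Suc[OF \<phi>_lim[OF that]] LIMSEQ_unique by blast
  qed
  ultimately show ?thesis by (rule that)
qed

section \<open>The quadratic mild problem\<close>

text \<open>\<open>F \<chi>(4aF)\<close> is the smaller root \<open>(1 - \<surd>(1 - 4aF)) / (2a)\<close> of \<open>a R\<^sup>2 - R + F\<close>.\<close>
lemma chiX_quadratic_root: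
  fixes a F :: real
  assumes a: "0 < a" and F: "0 \<le> F" and small: "4 * a * F \<le> 1"
  defines "R \<equiv> F * chiX (4 * a * F)"
  shows "0 \<le> R" "F + a * R\<^sup>2 = R" "2 * a * R \<le> 1"
proof -
  define u where "u = sqrt (1 - 4 * a * F)"
  have u: "0 \<le> u" "u \<le> 1" "u\<^sup>2 = 1 - 4 * a * F"
    using small a F by (auto simp: u_def)
  have R_eq: "R = (1 - u) / (2 * a)"
  proof (cases "F = 0")
    case True
    then show ?thesis by (simp add: R_def chiX_def u_def)
  next
    case False
    then show ?thesis using a by (simp add: R_def chiX_def u_def field_simps)
  qed
  show "0 \<le> R" "2 * a * R \<le> 1" using R_eq u a by auto
  have F_eq: "F = (1 - u\<^sup>2) / (4 * a)" using u a by simp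
  show "F + a * R\<^sup>2 = R"
    using a unfolding R_eq F_eq by (simp add: field_simps power2_eq_square)
qed

text \<open>At distance \<open>\<ge> \<delta>\<close> from the singularity the damping factor is at most \<open>\<epsilon>/(2N)\<close>; within
  \<open>\<delta>\<close> of it the weakly singular bound contributes at most \<open>M \<delta>\<^sup>\<sigma> / \<sigma>\<close>.\<close>
lemma damped_kernel_mass_small:
  fixes \<mu> :: "real \<Rightarrow> real" and B N M \<sigma> r0 \<epsilon> :: real
  assumes \<mu>_nonneg: "\<And>r. 0 < r \<Longrightarrow> 0 \<le> \<mu> r"
    and \<mu>_le: "\<And>r. 0 < r \<Longrightarrow> r \<le> r0 \<Longrightarrow> \<mu> r \<le> M * r powr (\<sigma> - 1)"
    and \<mu>_conv: "\<And>t. 0 \<le> t \<Longrightarrow> (\<lambda>s. \<mu> (t - s) * exp (- B * s)) integrable_on {0..t}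
                        \<and> integral {0..t} (\<lambda>s. \<mu> (t - s) * exp (- B * s)) \<le> N"
    and B: "0 \<le> B" and N: "0 < N" and M: "0 \<le> M" and \<sigma>: "0 < \<sigma>" and r0: "0 < r0" and \<epsilon>: "0 < \<epsilon>"
  obtains \<kappa> where "0 \<le> \<kappa>"
    and "\<And>t. 0 \<le> t \<Longrightarrow> \<exists>h. h integrable_on {0..t} \<and> integral {0..t} h \<le> \<epsilon> \<and>
           (\<forall>s. 0 \<le> s \<and> s < t \<longrightarrow> \<mu> (t - s) * exp (- B * s) * exp (- \<kappa> * (t - s)) \<le> h s)"
proof -
  obtain \<delta> where \<delta>: "0 < \<delta>" "\<delta> \<le> r0" and near_small: "M * (\<delta> powr \<sigma> / \<sigma>) < \<epsilon> / 2"
    using powr_integral_eventually_small[OF \<sigma> _ r0, of "\<epsilon> / 2" M] \<epsilon> by auto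
  define c where "c = \<epsilon> / (2 * N)"
  have c: "0 < c" using \<epsilon> N by (simp add: c_def)
  define \<kappa> where "\<kappa> = \<bar>ln c\<bar> / \<delta>"
  have \<kappa>: "0 \<le> \<kappa>" using \<delta> by (simp add: \<kappa>_def)
  have far_small: "exp (- \<kappa> * r) \<le> c" if "\<delta> \<le> r" for r
  proof -
    have "exp (- \<kappa> * r) \<le> exp (- \<kappa> * \<delta>)" using that \<kappa> by (simp add: mult_left_mono)
    also have "\<dots> = exp (- \<bar>ln c\<bar>)" using \<delta> by (simp add: \<kappa>_def)
    also have "\<dots> \<le> exp (ln c)" by simp
    finally show ?thesis using c by simp
  qed
  have "\<exists>h. h integrable_on {0..t} \<and> integral {0..t} h \<le> \<epsilon> \<and>
          (\<forall>s. 0 \<le> s \<and> s < t \<longrightarrow> \<mu> (t - s) * exp (- B * s) * exp (- \<kappa> * (t - s)) \<le> h s)"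
    if t: "0 \<le> t" for t
  proof (intro exI conjI allI impI)
    define ind where "ind s = (if s \<in> {t - \<delta>..t} then (t - s) powr (\<sigma> - 1) else 0)" for s
    define h where "h s = c * (\<mu> (t - s) * exp (- B * s)) + M * ind s" for s
    have restrict: "{t - \<delta>..t} \<inter> {0..t} = {max 0 (t - \<delta>)..t}" by auto
    have ind_int: "(ind has_integral (t - max 0 (t - \<delta>)) powr \<sigma> / \<sigma>) {0..t}"
      unfolding ind_def has_integral_restrict_Int restrict using t \<delta>
      by (intro has_integral_powr_diff \<sigma>) auto
    have ind_le: "(t - max 0 (t - \<delta>)) powr \<sigma> / \<sigma> \<le> \<delta> powr \<sigma> / \<sigma>"
      using t \<delta> \<sigma> by (intro divide_right_mono powr_mono2) auto
    have h_int: "(h has_integral c * integral {0..t} (\<lambda>s. \<mu> (t - s) * exp (- B * s))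
                   + M * ((t - max 0 (t - \<delta>)) powr \<sigma> / \<sigma>)) {0..t}"
      unfolding h_def using \<mu>_conv[OF t] ind_int
      by (intro has_integral_add has_integral_mult_right integrable_integral) auto
    then show "h integrable_on {0..t}" by blast
    have "c * integral {0..t} (\<lambda>s. \<mu> (t - s) * exp (- B * s)) \<le> c * N"
      using \<mu>_conv[OF t] c by (intro mult_left_mono) auto
    moreover have "M * ((t - max 0 (t - \<delta>)) powr \<sigma> / \<sigma>) \<le> M * (\<delta> powr \<sigma> / \<sigma>)"
      using ind_le M by (rule mult_left_mono)
    moreover have "c * N = \<epsilon> / 2" using N by (simp add: c_def)
    ultimately show "integral {0..t} h \<le> \<epsilon>"
      using integral_unique[OF h_int] near_small by linarith
    fix s assume s: "0 \<le> s \<and> s < t"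
    have \<mu>s: "0 \<le> \<mu> (t - s)" using s by (intro \<mu>_nonneg) auto
    show "\<mu> (t - s) * exp (- B * s) * exp (- \<kappa> * (t - s)) \<le> h s"
    proof (cases "\<delta> \<le> t - s")
      case True
      have "\<mu> (t - s) * exp (- B * s) * exp (- \<kappa> * (t - s)) \<le> \<mu> (t - s) * exp (- B * s) * c"
        using far_small[OF True] \<mu>s by (intro mult_left_mono) auto
      moreover have "0 \<le> M * ind s" using M by (simp add: ind_def)
      ultimately show ?thesis by (simp add: h_def mult_ac)
    next
      case False
      have "\<mu> (t - s) * exp (- B * s) * exp (- \<kappa> * (t - s)) \<le> \<mu> (t - s) * 1 * 1"
        using \<mu>s s B \<kappa> by (intro mult_mono) auto
      also have "\<dots> \<le> M * ind s"
        using \<mu>_le[of "t - s"] s False \<delta> by (simp add: ind_def)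
      finally show ?thesis
        using \<mu>s c by (simp add: h_def add_increasing)
    qed
  qed
  with \<kappa> show ?thesis by (rule that)
qed

lemma norm_bilinear_diag_diff_le:
  assumes "bilinear P" "\<And>f g. norm (P f g) \<le> K * norm f * norm g"
  shows "norm (P a a - P b b) \<le> K * norm a * norm (a - b) + K * norm (a - b) * norm b"
proof -
  have "P a a - P b b = P a (a - b) + P (a - b) b"
    using assms(1) by (simp add: bilinear_rsub bilinear_lsub)
  then show ?thesis using assms(2) by (metis add_mono norm_triangle_le)
qed

locale quadratic_mild_problem =
  fixes SF :: "real \<Rightarrow> 'f::banach \<Rightarrow> 'f" and TM :: "real \<Rightarrow> 'm::real_normed_vector \<Rightarrow> 'f"
    and \<mu> :: "real \<Rightarrow> real" and P :: "'f \<Rightarrow> 'f \<Rightarrow> 'm" and \<xi> :: "real \<Rightarrow> 'm"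
    and B N K J M \<sigma> r0 :: real
  assumes SF_continuous: "continuous_on (UNIV \<times> {0..}) (\<lambda>(f, t). SF t f)"
    and SF_norm_le: "\<And>t f. 0 \<le> t \<Longrightarrow> norm (SF t f) \<le> exp (- B * t) * norm f"
    and TM_continuous: "continuous_on (UNIV \<times> {0<..}) (\<lambda>(g, t). TM t g)"
    and TM_linear: "\<And>t. 0 < t \<Longrightarrow> linear (TM t)"
    and TM_norm_le: "\<And>t g. 0 < t \<Longrightarrow> norm (TM t g) \<le> \<mu> t * exp (- B * t) * norm g"
    and \<mu>_pos: "\<And>t. 0 < t \<Longrightarrow> 0 < \<mu> t"
    and \<mu>_le_powr: "\<And>r. 0 < r \<Longrightarrow> r \<le> r0 \<Longrightarrow> \<mu> r \<le> M * r powr (\<sigma> - 1)"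
    and \<mu>_convolution_le: "\<And>t. 0 \<le> t \<Longrightarrow> (\<lambda>s. \<mu> (t - s) * exp (- B * s)) integrable_on {0..t}
                          \<and> integral {0..t} (\<lambda>s. \<mu> (t - s) * exp (- B * s)) \<le> N"
    and P_bilinear: "bilinear P" and P_norm_le: "\<And>f g. norm (P f g) \<le> K * norm f * norm g"
    and \<xi>_continuous: "continuous_on {0..} \<xi>"
    and \<xi>_norm_le: "\<And>t. 0 \<le> t \<Longrightarrow> norm (\<xi> t) \<le> J * exp (- 2 * B * t)"
    and B_nonneg: "0 \<le> B" and N_pos: "0 < N" and K_nonneg: "0 \<le> K" and J_nonneg: "0 \<le> J"
    and M_nonneg: "0 \<le> M" and \<sigma>_pos: "0 < \<sigma>" and r0_pos: "0 < r0"
begin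

sublocale kernel: weakly_singular_kernel TM M \<sigma> r0
proof
  show "norm (TM r g) \<le> M * r powr (\<sigma> - 1) * norm g" if r: "0 < r" "r \<le> r0" for r g
  proof -
    have "norm (TM r g) \<le> \<mu> r * exp (- B * r) * norm g" using TM_norm_le r by blast
    also have "\<dots> \<le> \<mu> r * 1 * norm g"
      using r B_nonneg \<mu>_pos[of r] by (intro mult_right_mono mult_left_mono) auto
    also have "\<dots> \<le> M * r powr (\<sigma> - 1) * norm g"
      using \<mu>_le_powr[OF r] by (simp add: mult_right_mono)
    finally show ?thesis .
  qed
qed (use TM_continuous M_nonneg \<sigma>_pos r0_pos in auto)

definition mild_map :: "'f \<Rightarrow> (real \<Rightarrow> 'f) \<Rightarrow> real \<Rightarrow> 'f" where
  "mild_map f0 \<phi> t = SF t f0 + integral {0..t} (\<lambda>s. TM (t - s) (P (\<phi> s) (\<phi> s) + \<xi> s))"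

abbreviation decaying :: "real \<Rightarrow> (real \<Rightarrow> 'f) set" where
  "decaying R \<equiv> dominated_paths (\<lambda>t. R * exp (- B * t))"

lemma bounded_bilinear_P: "bounded_bilinear P"
proof
  fix a a' b b' :: 'f and r :: real
  show "P (a + a') b = P a b + P a' b" by (rule bilinear_ladd[OF P_bilinear])
  show "P a (b + b') = P a b + P a b'" by (rule bilinear_radd[OF P_bilinear])
  show "P (r *\<^sub>R a) b = r *\<^sub>R P a b" by (rule bilinear_lmul[OF P_bilinear])
  show "P a (r *\<^sub>R b) = r *\<^sub>R P a b" by (rule bilinear_rmul[OF P_bilinear])
  show "\<exists>K. \<forall>a b. norm (P a b) \<le> norm a * norm b * K"
    using P_norm_le by (intro exI[of _ K]) (auto simp: mult_ac)
qed

lemma continuous_on_source: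
  assumes "\<phi> \<in> decaying R"
  shows "continuous_on {0..} (\<lambda>s. P (\<phi> s) (\<phi> s) + \<xi> s)"
  using assms \<xi>_continuous unfolding dominated_paths_def
  by (auto intro!: continuous_intros bounded_bilinear.continuous_on[OF bounded_bilinear_P])

lemma norm_source_le:
  assumes "\<phi> \<in> decaying R" "0 \<le> R" "0 \<le> s"
  shows "norm (P (\<phi> s) (\<phi> s) + \<xi> s) \<le> (K * R\<^sup>2 + J) * exp (- 2 * B * s)"
proof -
  have \<phi>: "norm (\<phi> s) \<le> R * exp (- B * s)" using assms unfolding dominated_paths_def by auto
  have "norm (P (\<phi> s) (\<phi> s) + \<xi> s) \<le> K * norm (\<phi> s) * norm (\<phi> s) + J * exp (- 2 * B * s)"
    using P_norm_le \<xi>_norm_le assms(3) by (intro norm_triangle_le add_mono) auto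
  also have "K * norm (\<phi> s) * norm (\<phi> s) \<le> K * (R * exp (- B * s)) * (R * exp (- B * s))"
    using \<phi> K_nonneg assms(2) by (intro mult_mono mult_left_mono) auto
  also have "K * (R * exp (- B * s)) * (R * exp (- B * s)) = K * R\<^sup>2 * exp (- 2 * B * s)"
    by (simp add: power2_eq_square mult_exp_exp algebra_simps)
  finally show ?thesis by (simp add: algebra_simps)
qed

lemma norm_source_le_const:
  assumes "\<phi> \<in> decaying R" "0 \<le> R" "0 \<le> s"
  shows "norm (P (\<phi> s) (\<phi> s) + \<xi> s) \<le> K * R\<^sup>2 + J"
proof -
  have "(K * R\<^sup>2 + J) * exp (- 2 * B * s) \<le> (K * R\<^sup>2 + J) * 1"
    using assms(3) B_nonneg K_nonneg J_nonneg by (intro mult_left_mono) auto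
  then show ?thesis using norm_source_le[OF assms] by simp
qed

lemma mild_map_has_integral:
  assumes "\<phi> \<in> decaying R" "0 \<le> R" "0 \<le> t"
  shows "((\<lambda>s. TM (t - s) (P (\<phi> s) (\<phi> s) + \<xi> s)) has_integral (mild_map f0 \<phi> t - SF t f0)) {0..t}"
proof -
  have "(\<lambda>s. TM (t - s) (P (\<phi> s) (\<phi> s) + \<xi> s)) integrable_on {0..t}"
    using norm_source_le_const[OF assms(1,2)]
    by (intro kernel.convolution_integrable continuous_on_subset[OF continuous_on_source[OF assms(1)]])
       auto
  then show ?thesis by (simp add: mild_map_def has_integral_integral)
qed

lemma mild_map_decaying:
  assumes \<phi>: "\<phi> \<in> decaying R" and R: "0 \<le> R" "norm f0 + N * (K * R\<^sup>2 + J) \<le> R"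
  shows "mild_map f0 \<phi> \<in> decaying R"
  unfolding dominated_paths_def
proof (intro CollectI conjI allI impI)
  have "continuous_on {0..} ((\<lambda>(f, t). SF t f) \<circ> (\<lambda>t. (f0, t)))"
    by (intro continuous_on_compose continuous_intros continuous_on_subset[OF SF_continuous]) auto
  moreover have "continuous_on {0..} (\<lambda>t. integral {0..t} (\<lambda>s. TM (t - s) (P (\<phi> s) (\<phi> s) + \<xi> s)))"
    using norm_source_le_const[OF \<phi> R(1)]
    by (intro kernel.continuous_on_convolution continuous_on_source[OF \<phi>]) auto
  ultimately show "continuous_on {0..} (mild_map f0 \<phi>)"
    unfolding mild_map_def by (auto simp: o_def intro: continuous_on_add)
  fix t :: real assume t: "0 \<le> t"
  have "norm (integral {0..t} (\<lambda>s. TM (t - s) (P (\<phi> s) (\<phi> s) + \<xi> s)))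
        \<le> integral {0..t} (\<lambda>s. (K * R\<^sup>2 + J) * exp (- B * t) * (\<mu> (t - s) * exp (- B * s)))"
  proof (rule norm_integral_le_of_bound_on_Ico)
    show "(\<lambda>s. TM (t - s) (P (\<phi> s) (\<phi> s) + \<xi> s)) integrable_on {0..t}"
      using mild_map_has_integral[OF \<phi> R(1) t] by blast
    show "(\<lambda>s. (K * R\<^sup>2 + J) * exp (- B * t) * (\<mu> (t - s) * exp (- B * s))) integrable_on {0..t}"
      using \<mu>_convolution_le[OF t] by (intro integrable_on_mult_right) auto
    fix s assume s: "0 \<le> s" "s < t"
    have "norm (TM (t - s) (P (\<phi> s) (\<phi> s) + \<xi> s))
          \<le> \<mu> (t - s) * exp (- B * (t - s)) * norm (P (\<phi> s) (\<phi> s) + \<xi> s)"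
      using TM_norm_le s by auto
    also have "\<dots> \<le> \<mu> (t - s) * exp (- B * (t - s)) * ((K * R\<^sup>2 + J) * exp (- 2 * B * s))"
      using norm_source_le[OF \<phi> R(1) s(1)] \<mu>_pos[of "t - s"] s by (intro mult_left_mono) auto
    also have "\<dots> = (K * R\<^sup>2 + J) * exp (- B * t) * (\<mu> (t - s) * exp (- B * s))"
      by (simp add: mult_exp_exp algebra_simps)
    finally show "norm (TM (t - s) (P (\<phi> s) (\<phi> s) + \<xi> s))
                  \<le> (K * R\<^sup>2 + J) * exp (- B * t) * (\<mu> (t - s) * exp (- B * s))" .
  qed
  also have "\<dots> \<le> (K * R\<^sup>2 + J) * exp (- B * t) * N"
    using \<mu>_convolution_le[OF t] K_nonneg J_nonneg by (simp add: mult_left_mono)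
  finally have "norm (mild_map f0 \<phi> t) \<le> exp (- B * t) * norm f0 + (K * R\<^sup>2 + J) * exp (- B * t) * N"
    unfolding mild_map_def using SF_norm_le[OF t, of f0] by (metis add_mono norm_triangle_le)
  also have "\<dots> = (norm f0 + N * (K * R\<^sup>2 + J)) * exp (- B * t)" by (simp add: algebra_simps)
  also have "\<dots> \<le> R * exp (- B * t)" using R(2) by (simp add: mult_right_mono)
  finally show "norm (mild_map f0 \<phi> t) \<le> R * exp (- B * t)" .
qed

text \<open>The map contracts the distance weighted by \<open>e\<^sup>(\<^sup>\<kappa>\<^sup>-\<^sup>B\<^sup>)\<^sup>t\<close> by the factor \<open>K N R\<close>, half of
  the factor \<open>2 K N R \<le> 1\<close> of the unweighted estimate, which may equal \<open>1\<close>.\<close>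
lemma mild_map_contraction:
  obtains \<kappa> where "0 \<le> \<kappa>"
    and "\<And>f0 R \<phi> \<psi> D t. \<phi> \<in> decaying R \<Longrightarrow> \<psi> \<in> decaying R \<Longrightarrow> 0 \<le> R \<Longrightarrow> 0 \<le> D \<Longrightarrow>
           (\<And>s. 0 \<le> s \<Longrightarrow> norm (\<phi> s - \<psi> s) \<le> D * exp ((\<kappa> - B) * s)) \<Longrightarrow> 0 \<le> t \<Longrightarrow>
           norm (mild_map f0 \<phi> t - mild_map f0 \<psi> t) \<le> K * N * R * D * exp ((\<kappa> - B) * t)"
proof -
  obtain \<kappa> where \<kappa>: "0 \<le> \<kappa>"
    and damped: "\<And>t. 0 \<le> t \<Longrightarrow> \<exists>h. h integrable_on {0..t} \<and> integral {0..t} h \<le> N / 2 \<and>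
                   (\<forall>s. 0 \<le> s \<and> s < t \<longrightarrow> \<mu> (t - s) * exp (- B * s) * exp (- \<kappa> * (t - s)) \<le> h s)"
    using damped_kernel_mass_small[OF less_imp_le[OF \<mu>_pos] \<mu>_le_powr \<mu>_convolution_le
            B_nonneg N_pos M_nonneg \<sigma>_pos r0_pos, of "N / 2"] N_pos
    by auto
  have "norm (mild_map f0 \<phi> t - mild_map f0 \<psi> t) \<le> K * N * R * D * exp ((\<kappa> - B) * t)"
    if \<phi>: "\<phi> \<in> decaying R" and \<psi>: "\<psi> \<in> decaying R" and R: "0 \<le> R" and D: "0 \<le> D"
      and close: "\<And>s. 0 \<le> s \<Longrightarrow> norm (\<phi> s - \<psi> s) \<le> D * exp ((\<kappa> - B) * s)" and t: "0 \<le> t"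
    for f0 R \<phi> \<psi> D t
  proof -
    obtain h where h: "h integrable_on {0..t}" "integral {0..t} h \<le> N / 2"
      and h_ge: "\<And>s. 0 \<le> s \<Longrightarrow> s < t \<Longrightarrow> \<mu> (t - s) * exp (- B * s) * exp (- \<kappa> * (t - s)) \<le> h s"
      using damped[OF t] by blast
    define c where "c = 2 * K * R * D * exp ((\<kappa> - B) * t)"
    have c: "0 \<le> c" using K_nonneg R D by (simp add: c_def)
    let ?Q = "\<lambda>\<phi> s. P (\<phi> s) (\<phi> s) + \<xi> s"
    let ?I = "\<lambda>\<phi> s. TM (t - s) (?Q \<phi> s)"
    note I\<phi> = mild_map_has_integral[OF \<phi> R t, of f0] and I\<psi> = mild_map_has_integral[OF \<psi> R t, of f0]
    have "mild_map f0 \<phi> t - mild_map f0 \<psi> t = integral {0..t} (\<lambda>s. ?I \<phi> s - ?I \<psi> s)"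
      using integral_diff[OF has_integral_integrable[OF I\<phi>] has_integral_integrable[OF I\<psi>]]
        integral_unique[OF I\<phi>] integral_unique[OF I\<psi>] by simp
    also have "norm \<dots> \<le> integral {0..t} (\<lambda>s. c * h s)"
    proof (rule norm_integral_le_of_bound_on_Ico)
      show "(\<lambda>s. ?I \<phi> s - ?I \<psi> s) integrable_on {0..t}"
        using integrable_diff[OF has_integral_integrable[OF I\<phi>] has_integral_integrable[OF I\<psi>]] .
      show "(\<lambda>s. c * h s) integrable_on {0..t}" using h(1) by (rule integrable_on_mult_right)
      fix s assume s: "0 \<le> s" "s < t"
      have bounds: "norm (\<phi> s) \<le> R * exp (- B * s)" "norm (\<psi> s) \<le> R * exp (- B * s)"
        using \<phi> \<psi> s unfolding dominated_paths_def by auto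
      have "norm (?Q \<phi> s - ?Q \<psi> s)
            \<le> K * norm (\<phi> s) * norm (\<phi> s - \<psi> s) + K * norm (\<phi> s - \<psi> s) * norm (\<psi> s)"
        using norm_bilinear_diag_diff_le[OF P_bilinear P_norm_le] by simp
      also have "\<dots> \<le> K * (R * exp (- B * s)) * (D * exp ((\<kappa> - B) * s))
                      + K * (D * exp ((\<kappa> - B) * s)) * (R * exp (- B * s))"
        using bounds close[OF s(1)] K_nonneg R D
        by (intro add_mono mult_mono mult_left_mono) auto
      finally have Q_diff: "norm (?Q \<phi> s - ?Q \<psi> s) \<le> 2 * K * R * D * exp ((\<kappa> - 2 * B) * s)"
        by (simp add: mult_exp_exp algebra_simps)
      have "linear (TM (t - s))" using s by (intro TM_linear) simp
      then have "norm (?I \<phi> s - ?I \<psi> s) = norm (TM (t - s) (?Q \<phi> s - ?Q \<psi> s))"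
        by (simp only: linear_diff)
      also have "\<dots> \<le> \<mu> (t - s) * exp (- B * (t - s)) * norm (?Q \<phi> s - ?Q \<psi> s)"
        using TM_norm_le s by simp
      also have "\<dots> \<le> \<mu> (t - s) * exp (- B * (t - s)) * (2 * K * R * D * exp ((\<kappa> - 2 * B) * s))"
        using Q_diff \<mu>_pos[of "t - s"] s by (intro mult_left_mono) auto
      also have "\<dots> = c * (\<mu> (t - s) * exp (- B * s) * exp (- \<kappa> * (t - s)))"
        by (simp add: c_def mult_exp_exp algebra_simps)
      also have "\<dots> \<le> c * h s" using h_ge[OF s] c by (rule mult_left_mono)
      finally show "norm (?I \<phi> s - ?I \<psi> s) \<le> c * h s" .
    qed
    also have "\<dots> = c * integral {0..t} h" by simp
    also have "\<dots> \<le> c * (N / 2)" using h(2) c by (rule mult_left_mono)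
    also have "\<dots> = K * N * R * D * exp ((\<kappa> - B) * t)" by (simp add: c_def)
    finally show ?thesis .
  qed
  with \<kappa> show ?thesis by (rule that)
qed

lemma mild_solution_exists:
  assumes R: "0 \<le> R" "norm f0 + N * (K * R\<^sup>2 + J) \<le> R" "2 * K * N * R \<le> 1"
  obtains \<phi> where "\<phi> \<in> decaying R"
    and "\<And>t. 0 \<le> t \<Longrightarrow> ((\<lambda>s. TM (t - s) (P (\<phi> s) (\<phi> s) + \<xi> s)) has_integral (\<phi> t - SF t f0)) {0..t}"
proof -
  obtain \<kappa> where \<kappa>: "0 \<le> \<kappa>"
    and contraction: "\<And>R \<phi> \<psi> D t. \<phi> \<in> decaying R \<Longrightarrow> \<psi> \<in> decaying R \<Longrightarrow> 0 \<le> R \<Longrightarrow> 0 \<le> D \<Longrightarrow>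
           (\<And>s. 0 \<le> s \<Longrightarrow> norm (\<phi> s - \<psi> s) \<le> D * exp ((\<kappa> - B) * s)) \<Longrightarrow> 0 \<le> t \<Longrightarrow>
           norm (mild_map f0 \<phi> t - mild_map f0 \<psi> t) \<le> K * N * R * D * exp ((\<kappa> - B) * t)"
    using mild_map_contraction by metis
  obtain \<phi> where \<phi>: "\<phi> \<in> decaying R" and fixed: "\<And>t. 0 \<le> t \<Longrightarrow> mild_map f0 \<phi> t = \<phi> t"
  proof (rule weighted_contraction_fixpoint[where \<Phi> = "mild_map f0" and w = "\<lambda>t. R * exp ((\<kappa> - B) * t)"
                                             and q = "K * N * R"])
    show "mild_map f0 \<phi> \<in> decaying R" if "\<phi> \<in> decaying R" for \<phi>
      using that R(1,2) by (rule mild_map_decaying)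
    show "(\<lambda>_. 0) \<in> decaying R" using R(1) by (simp add: dominated_paths_def)
    show "R * exp (- B * t) \<le> R * exp ((\<kappa> - B) * t)" if "0 \<le> t" for t
      using that \<kappa> R(1) by (intro mult_left_mono) (auto simp: algebra_simps)
    show "continuous_on {0..} (\<lambda>t. R * exp ((\<kappa> - B) * t))" by (intro continuous_intros)
    show "norm (mild_map f0 \<phi> t - mild_map f0 \<psi> t) \<le> K * N * R * D * (R * exp ((\<kappa> - B) * t))"
      if "\<phi> \<in> decaying R" "\<psi> \<in> decaying R" "0 \<le> D"
        and "\<And>s. 0 \<le> s \<Longrightarrow> norm (\<phi> s - \<psi> s) \<le> D * (R * exp ((\<kappa> - B) * s))" "0 \<le> t"
      for \<phi> \<psi> D t
      using contraction[OF that(1,2) R(1), of "D * R"] that(3-5) R(1) by (simp add: mult_ac)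
    show "0 \<le> K * N * R" "K * N * R < 1" using K_nonneg N_pos R(1,3) by auto
  qed blast
  show ?thesis
  proof (rule that[OF \<phi>])
    show "((\<lambda>s. TM (t - s) (P (\<phi> s) (\<phi> s) + \<xi> s)) has_integral (\<phi> t - SF t f0)) {0..t}"
      if "0 \<le> t" for t
      using mild_map_has_integral[OF \<phi> R(1) that, of f0] fixed[OF that] by simp
  qed
qed

end

lemma linear_if_injective_comp:
  fixes j :: "'b::real_vector \<Rightarrow> 'c::real_vector" and T :: "'a::real_vector \<Rightarrow> 'b"
  assumes j: "linear j" "inj j" and L: "linear L" and comp: "\<And>x. j (T x) = L x"
  shows "linear T"
proof (rule linearI)
  fix x y :: 'a and c :: real
  have "j (T (x + y)) = j (T x + T y)"
    using j(1) L by (simp add: comp linear_add)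
  with j(2) show "T (x + y) = T x + T y" by (rule injD)
  have "j (T (c *\<^sub>R x)) = j (c *\<^sub>R T x)"
    using j(1) L by (simp add: comp linear_scale)
  with j(2) show "T (c *\<^sub>R x) = c *\<^sub>R T x" by (rule injD)
qed

lemma bigo_at_right_0_imp_bound:
  fixes f g :: "real \<Rightarrow> real"
  assumes "f \<in> O[at_right 0](g)"
  obtains c r where "0 < c" "0 < r" "\<And>x. 0 < x \<Longrightarrow> x \<le> r \<Longrightarrow> f x \<le> c * \<bar>g x\<bar>"
proof -
  obtain c where c: "0 < c" and "\<forall>\<^sub>F x in at_right 0. norm (f x) \<le> c * norm (g x)"
    using assms by (elim landau_o.bigE)
  then obtain b where b: "0 < b" and le: "\<And>x. 0 < x \<Longrightarrow> x < b \<Longrightarrow> \<bar>f x\<bar> \<le> c * \<bar>g x\<bar>"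
    unfolding eventually_at_right_field by auto
  show ?thesis
  proof (rule that[OF c, of "b / 2"])
    show "f x \<le> c * \<bar>g x\<bar>" if "0 < x" "x \<le> b / 2" for x
      using le[of x] that b by auto
  qed (use b in auto)
qed

theorem proposition5p12:
  fixes iP :: "'p::banach \<Rightarrow> 'f::banach"
    and iF :: "'f \<Rightarrow> 'm::banach"
    and A :: "'p \<Rightarrow> 'm"
    and S :: "real \<Rightarrow> 'm \<Rightarrow> 'm"
    and SF :: "real \<Rightarrow> 'f \<Rightarrow> 'f"
    and TM :: "real \<Rightarrow> 'm \<Rightarrow> 'f"
    and \<mu> :: "real \<Rightarrow> real"
    and \<P> :: "'f \<Rightarrow> 'f \<Rightarrow> 'm"
    and \<xi> :: "real \<Rightarrow> 'm"
    and B N K J \<sigma> :: real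
    and f0 :: 'f
  assumes emb_P: "dense_embedding iP"
    and emb_F: "dense_embedding iF"
    and A_lin: "linear A"
    and A_graph_norm: "\<exists>c1>0. \<exists>c2>0. \<forall>p. c1 * norm p \<le> norm (iF (iP p)) + norm (A p)
                                        \<and> norm (iF (iP p)) + norm (A p) \<le> c2 * norm p"
    and gen: "generates (iF \<circ> iP) A S"
    and SF_def: "\<forall>t\<ge>0. \<forall>f. iF (SF t f) = S t (iF f)"
    and SF_cont: "continuous_on (UNIV \<times> {0..}) (\<lambda>(f, t). SF t f)"
    and TM_def: "\<forall>t>0. \<forall>g. iF (TM t g) = S t g"
    and TM_cont: "continuous_on (UNIV \<times> {0<..}) (\<lambda>(g, t). TM t g)"
    and B_nonneg: "B \<ge> 0"
    and N_pos: "N > 0"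
    and SF_bound: "\<forall>t\<ge>0. \<forall>f. norm (SF t f) \<le> exp (- B * t) * norm f"
    and TM_bound: "\<forall>t>0. \<forall>g. norm (TM t g) \<le> \<mu> t * exp (- B * t) * norm g"
    and \<mu>_cont: "continuous_on {0<..} \<mu>"
    and \<mu>_pos: "\<forall>t>0. \<mu> t > 0"
    and \<sigma>: "0 < \<sigma>" "\<sigma> \<le> 1"
    and \<mu>_sing: "\<mu> \<in> O[at_right 0](\<lambda>t. t powr (-(1 - \<sigma>)))"
    and \<mu>_int: "\<forall>t\<ge>0. (\<lambda>s. \<mu> (t - s) * exp (- B * s)) integrable_on {0..t}
                   \<and> integral {0..t} (\<lambda>s. \<mu> (t - s) * exp (- B * s)) \<le> N"
    and P_bil: "bilinear \<P>"
    and K_pos: "K > 0"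
    and P_bound: "\<forall>f g. norm (\<P> f g) \<le> K * norm f * norm g"
    and \<xi>_lip: "\<forall>a\<ge>0. \<exists>L. L-lipschitz_on {0..a} \<xi>"
    and J_nonneg: "J \<ge> 0"
    and \<xi>_bound: "\<forall>t\<ge>0. norm (\<xi> t) \<le> J * exp (- 2 * B * t)"
    and small: "4 * K * N * (norm f0 + N * J) \<le> 1"
  shows "\<exists>\<phi> :: real \<Rightarrow> 'f.
           continuous_on {0..} \<phi> \<and>
           (\<forall>t\<ge>0. ((\<lambda>s. TM (t - s) (\<P> (\<phi> s) (\<phi> s) + \<xi> s)) has_integral (\<phi> t - SF t f0)) {0..t}) \<and>
           (\<forall>t\<ge>0. norm (\<phi> t) \<le> (norm f0 + N * J) * chiX (4 * K * N * (norm f0 + N * J)) * exp (- B * t))"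
proof -
  have iF: "linear iF" "inj iF"
    using emb_F by (auto simp: dense_embedding_def bounded_linear.linear)
  have TM_linear: "linear (TM t)" if "0 < t" for t
    using gen TM_def that unfolding generates_def strongly_continuous_semigroup_def
    by (intro linear_if_injective_comp[OF iF]) (auto intro: bounded_linear.linear)
  obtain M r0 where M: "0 < M" "0 < r0"
    and \<mu>_le: "\<And>r. 0 < r \<Longrightarrow> r \<le> r0 \<Longrightarrow> \<mu> r \<le> M * \<bar>r powr (-(1 - \<sigma>))\<bar>"
    using bigo_at_right_0_imp_bound[OF \<mu>_sing] by blast
  interpret quadratic_mild_problem SF TM \<mu> \<P> \<xi> B N K J M \<sigma> r0
  proof (rule quadratic_mild_problem.intro)
    show "\<mu> r \<le> M * r powr (\<sigma> - 1)" if "0 < r" "r \<le> r0" for r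
      using \<mu>_le[OF that] by simp
    show "continuous_on {0..} \<xi>"
      using \<xi>_lip by (intro continuous_on_atLeast_if_continuous_on_Icc) (auto dest: lipschitz_on_continuous_on)
  qed (use SF_cont SF_bound TM_cont TM_linear TM_bound \<mu>_pos \<mu>_int P_bil P_bound \<xi>_bound
           B_nonneg N_pos K_pos J_nonneg M \<sigma>(1) in auto)
  define F0 where "F0 = norm f0 + N * J"
  define R where "R = F0 * chiX (4 * (K * N) * F0)"
  have R: "0 \<le> R" "F0 + K * N * R\<^sup>2 = R" "2 * (K * N) * R \<le> 1"
    using chiX_quadratic_root[of "K * N" F0] K_pos N_pos J_nonneg small
    unfolding R_def F0_def by (auto simp: mult_ac)
  obtain \<phi> where "\<phi> \<in> decaying R"
    and "\<And>t. 0 \<le> t \<Longrightarrow> ((\<lambda>s. TM (t - s) (\<P> (\<phi> s) (\<phi> s) + \<xi> s)) has_integral (\<phi> t - SF t f0)) {0..t}"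
    by (rule mild_solution_exists[of R f0]) (use R in \<open>auto simp: F0_def algebra_simps\<close>)
  then show ?thesis
    unfolding dominated_paths_def R_def F0_def by (auto simp: mult_ac)
qed

end
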